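(* In the odd setting below, define recursively, for all $k\in\mathbb Z$ and $\ell\ge0$, block columns $G^{(k)}_{2\ell}$, $\hat G^{(k)}_{2\ell+1}$ and $n\times n$ matrices $\alpha_i^j(k)$ by $G^{(k)}_0=r_k$, $\hat G^{(k)}_{2\ell+1}=p_k(G^{(k+1)}_{2\ell})_{\mathrm{last}}+\Gamma G^{(k+1)}_{2\ell}$, $G^{(k)}_{2\ell+2}=\Gamma\hat G^{(k+1)}_{2\ell+1}$, $\alpha_0^{2\ell+1}(k)=(G^{(k+1)}_{2\ell})_{\mathrm{last}}$, $\alpha_{2r}^{2\ell+1}(k)=\alpha_{2r-1}^{2\ell}(k+1)$ ($1\le r\le\ell$), $\alpha_{2r+1}^{2\ell+2}(k)=\alpha_{2r}^{2\ell+1}(k+1)$ ($0\le r\le\ell$). Then for all $k$ and $\ell\ge0$, $$F^{(k)}_{2\ell}=\sum_{r=1}^{\ell}F^{(k)}_{2r-1}\alpha_{2r-1}^{2\ell}(k)+G^{(k)}_{2\ell},\qquad F^{(k)}_{2\ell+1}=\sum_{r=0}^{\ell}F^{(k)}_{2r}\alpha_{2r}^{2\ell+1}(k)+\hat G^{(k)}_{2\ell+1}.$$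
   Context: Odd setting: integers $n\ge1$, $s\ge1$, $m=2s+1$. For each $k\in\mathbb Z$ let $a_k^0,\dots,a_k^{2s}$ be $n\times n$ matrices, $N$-periodic in $k$. $Q_k$ is the $mn\times mn$ block matrix with $I_n$ in blocks $(i+1,i)$, $i=1,\dots,m-1$, last block column $(a_k^0;a_k^1;\dots;a_k^{2s})$, $O_n$ elsewhere. $r_k=(a_k^0;O_n;a_k^2;O_n;\dots;O_n;a_k^{2s})$ and $p_k=(O_n;a_k^1;O_n;a_k^3;\dots;a_k^{2s-1};O_n)$ (so the last block column of $Q_k$ is $p_k+r_k$). $\Gamma$ is the $mn\times mn$ block matrix with $I_n$ in blocks $(i+1,i)$ and $O_n$ elsewhere. $F^{(k)}_0=r_k$, $F^{(k)}_\ell=Q_kQ_{k+1}\cdots Q_{k+\ell-1}r_{k+\ell}$ for $\ell\ge1$. $(A)_{\mathrm{last}}$ is the last $n\times n$ block of a block column $A$. *)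

theory Defs
  imports "Jordan_Normal_Form.Matrix"
begin

text \<open>Odd setting: m = 2s+1, block size n. The coefficient matrices are
  a k j (k an integer, j = 0..2s), each an n x n matrix.
  All block matrices are ordinary (m n) x (m n) resp. (m n) x n matrices,
  with block indices 0-based: row i lies in block row i div n.\<close>

definition mdim :: "nat \<Rightarrow> nat \<Rightarrow> nat" where
  "mdim n s = (2*s+1) * n"

definition Qmat :: "nat \<Rightarrow> nat \<Rightarrow> (int \<Rightarrow> nat \<Rightarrow> 'a::comm_ring_1 mat) \<Rightarrow> int \<Rightarrow> 'a mat" where
  "Qmat n s a k = mat (mdim n s) (mdim n s) (\<lambda>(i,j).
     if j div n = 2*s then a k (i div n) $$ (i mod n, j mod n)
     else if i div n = j div n + 1 \<and> i mod n = j mod n then 1 else 0)"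

definition Gammat :: "nat \<Rightarrow> nat \<Rightarrow> 'a::comm_ring_1 mat" where
  "Gammat n s = mat (mdim n s) (mdim n s) (\<lambda>(i,j).
     if i div n = j div n + 1 \<and> i mod n = j mod n then 1 else 0)"

definition rcol :: "nat \<Rightarrow> nat \<Rightarrow> (int \<Rightarrow> nat \<Rightarrow> 'a::comm_ring_1 mat) \<Rightarrow> int \<Rightarrow> 'a mat" where
  "rcol n s a k = mat (mdim n s) n (\<lambda>(i,j).
     if even (i div n) then a k (i div n) $$ (i mod n, j) else 0)"

definition pcol :: "nat \<Rightarrow> nat \<Rightarrow> (int \<Rightarrow> nat \<Rightarrow> 'a::comm_ring_1 mat) \<Rightarrow> int \<Rightarrow> 'a mat" where
  "pcol n s a k = mat (mdim n s) n (\<lambda>(i,j).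
     if odd (i div n) then a k (i div n) $$ (i mod n, j) else 0)"

definition lastblk :: "nat \<Rightarrow> nat \<Rightarrow> 'a mat \<Rightarrow> 'a mat" where
  "lastblk n s A = mat n n (\<lambda>(i,j). A $$ (2*s*n + i, j))"

fun Qprod :: "nat \<Rightarrow> nat \<Rightarrow> (int \<Rightarrow> nat \<Rightarrow> 'a::comm_ring_1 mat) \<Rightarrow> int \<Rightarrow> nat \<Rightarrow> 'a mat" where
  "Qprod n s a k 0 = 1\<^sub>m (mdim n s)"
| "Qprod n s a k (Suc l) = Qmat n s a k * Qprod n s a (k+1) l"

definition Fcol :: "nat \<Rightarrow> nat \<Rightarrow> (int \<Rightarrow> nat \<Rightarrow> 'a::comm_ring_1 mat) \<Rightarrow> int \<Rightarrow> nat \<Rightarrow> 'a mat" where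
  "Fcol n s a k l = Qprod n s a k l * rcol n s a (k + int l)"

text \<open>Gcol k (2l) = G^{(k)}_{2l},  Gcol k (2l+1) = hat G^{(k)}_{2l+1}.\<close>
fun Gcol :: "nat \<Rightarrow> nat \<Rightarrow> (int \<Rightarrow> nat \<Rightarrow> 'a::comm_ring_1 mat) \<Rightarrow> int \<Rightarrow> nat \<Rightarrow> 'a mat" where
  "Gcol n s a k 0 = rcol n s a k"
| "Gcol n s a k (Suc j) =
     (if even j
      then pcol n s a k * lastblk n s (Gcol n s a (k+1) j) + Gammat n s * Gcol n s a (k+1) j
      else Gammat n s * Gcol n s a (k+1) j)"

text \<open>alpha k j i = alpha_i^j(k): alpha_0^{j+1}(k) = (G^{(k+1)}_j)_last (used for j even),
  alpha_{i+1}^{j+1}(k) = alpha_i^j(k+1).\<close>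
fun alpha :: "nat \<Rightarrow> nat \<Rightarrow> (int \<Rightarrow> nat \<Rightarrow> 'a::comm_ring_1 mat) \<Rightarrow> int \<Rightarrow> nat \<Rightarrow> nat \<Rightarrow> 'a mat" where
  "alpha n s a k 0 i = 0\<^sub>m n n"
| "alpha n s a k (Suc j) 0 = lastblk n s (Gcol n s a (k+1) j)"
| "alpha n s a k (Suc j) (Suc i) = alpha n s a (k+1) j i"

definition msum :: "nat \<Rightarrow> nat \<Rightarrow> ('b \<Rightarrow> 'a::comm_monoid_add mat) \<Rightarrow> 'b set \<Rightarrow> 'a mat" where
  "msum nr nc f I = mat nr nc (\<lambda>ij. \<Sum>x\<in>I. f x $$ ij)"

end

theory Submission imports Defs begin

text \<open>
  On an mn x n block column X the matrix Q_k acts as Q_k X = \<Gamma> X + (p_k + r_k) X_last.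
  Since F^(k)_(j+1) = Q_k F^(k+1)_j and \<alpha>^(j+1)_(i+1)(k) = \<alpha>^j_i(k+1), multiplying the
  expansion of F^(k+1)_j by Q_k turns each summand into the next summand of the expansion of
  F^(k)_(j+1), and it remains to compare Q_k G^(k+1)_j with G^(k)_(j+1). For even j the part
  r_k (G^(k+1)_j)_last = F^(k)_0 \<alpha>^(j+1)_0(k) is the new leading summand and the rest is the
  new G. For odd j the correction vanishes: G_j is supported on the block rows of the parity
  of j, so for odd j its last block row (index 2s) is zero.
\<close>

lemma msum_carrier [simp]: "msum nr nc f I \<in> carrier_mat nr nc"
  by (simp add: msum_def)

lemma msum_empty [simp]: "msum nr nc f {} = 0\<^sub>m nr nc"
  by (auto simp: msum_def)

lemma msum_insert:
  assumes "finite I" "x \<notin> I" "f x \<in> carrier_mat nr nc"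
  shows "msum nr nc f (insert x I) = f x + msum nr nc f I"
  using assms by (intro eq_matI) (auto simp: msum_def)

lemma msum_cong: "(\<And>x. x \<in> I \<Longrightarrow> f x = g x) \<Longrightarrow> msum nr nc f I = msum nr nc g I"
  unfolding msum_def by (intro cong_mat refl sum.cong) auto

lemma msum_reindex: "inj_on h I \<Longrightarrow> msum nr nc f (h ` I) = msum nr nc (f \<circ> h) I"
  unfolding msum_def by (simp add: sum.reindex)

lemma mult_msum:
  assumes M: "M \<in> carrier_mat nr m" and f: "\<And>x. x \<in> I \<Longrightarrow> f x \<in> carrier_mat m nc"
  shows "M * msum m nc f I = msum nr nc (\<lambda>x. M * f x) I"
proof (rule eq_matI)
  fix i j
  assume "i < dim_row (msum nr nc (\<lambda>x. M * f x) I)" and "j < dim_col (msum nr nc (\<lambda>x. M * f x) I)"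
  then have i: "i < nr" and j: "j < nc" by (auto simp: msum_def)
  have "(M * msum m nc f I) $$ (i,j) = (\<Sum>t<m. M $$ (i,t) * (\<Sum>x\<in>I. f x $$ (t,j)))"
    using M i j by (simp add: scalar_prod_def msum_def atLeast0LessThan)
  also have "\<dots> = (\<Sum>x\<in>I. \<Sum>t<m. M $$ (i,t) * f x $$ (t,j))"
    by (simp add: sum_distrib_left sum.swap[of _ I])
  also have "\<dots> = (\<Sum>x\<in>I. (M * f x) $$ (i,j))"
  proof (rule sum.cong)
    fix x assume "x \<in> I"
    then have "f x \<in> carrier_mat m nc" by (rule f)
    then show "(\<Sum>t<m. M $$ (i,t) * f x $$ (t,j)) = (M * f x) $$ (i,j)"
      using M i j by (simp add: scalar_prod_def atLeast0LessThan)
  qed simp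
  finally show "(M * msum m nc f I) $$ (i,j) = msum nr nc (\<lambda>x. M * f x) I $$ (i,j)"
    using i j by (simp add: msum_def)
qed (use M in \<open>auto simp: msum_def\<close>)

lemma block_matrices_carrier [simp]:
  "Qmat n s a k \<in> carrier_mat (mdim n s) (mdim n s)"
  "Gammat n s \<in> carrier_mat (mdim n s) (mdim n s)"
  "rcol n s a k \<in> carrier_mat (mdim n s) n"
  "pcol n s a k \<in> carrier_mat (mdim n s) n"
  "lastblk n s X \<in> carrier_mat n n"
  by (auto simp: Qmat_def Gammat_def rcol_def pcol_def lastblk_def)

lemma block_matrices_dim [simp]:
  "dim_row (Qmat n s a k) = mdim n s" "dim_col (Qmat n s a k) = mdim n s"
  "dim_row (Gammat n s) = mdim n s" "dim_col (Gammat n s) = mdim n s"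
  "dim_row (rcol n s a k) = mdim n s" "dim_col (rcol n s a k) = n"
  "dim_row (pcol n s a k) = mdim n s" "dim_col (pcol n s a k) = n"
  "dim_row (lastblk n s X) = n" "dim_col (lastblk n s X) = n"
  by (auto simp: Qmat_def Gammat_def rcol_def pcol_def lastblk_def)

lemma Qprod_carrier [simp]: "Qprod n s a k l \<in> carrier_mat (mdim n s) (mdim n s)"
  by (induction l arbitrary: k) (auto intro!: mult_carrier_mat[OF block_matrices_carrier(1)])

lemma Fcol_carrier [simp]: "Fcol n s a k l \<in> carrier_mat (mdim n s) n"
  unfolding Fcol_def by (rule mult_carrier_mat[OF Qprod_carrier block_matrices_carrier(3)])

lemma Gcol_carrier [simp]: "Gcol n s a k j \<in> carrier_mat (mdim n s) n"
  by (induction j arbitrary: k) (auto intro!: mult_carrier_mat add_carrier_mat)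

lemma alpha_carrier [simp]: "alpha n s a k j i \<in> carrier_mat n n"
proof (induction j arbitrary: k i)
  case (Suc j) then show ?case by (cases i) auto
qed simp

lemma Fcol_0: "Fcol n s a k 0 = rcol n s a k"
  by (simp add: Fcol_def)

lemma Fcol_Suc: "Fcol n s a k (Suc l) = Qmat n s a k * Fcol n s a (k+1) l"
  unfolding Fcol_def
  by (simp add: algebra_simps
      assoc_mult_mat[OF block_matrices_carrier(1) Qprod_carrier block_matrices_carrier(3)])

lemma Gcol_Suc_even:
  "even j \<Longrightarrow> Gcol n s a k (Suc j) =
     pcol n s a k * lastblk n s (Gcol n s a (k+1) j) + Gammat n s * Gcol n s a (k+1) j"
  by simp

lemma Gcol_Suc_odd: "odd j \<Longrightarrow> Gcol n s a k (Suc j) = Gammat n s * Gcol n s a (k+1) j"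
  by simp

declare Gcol.simps(2) [simp del]

lemma last_block_indices:
  assumes "0 < n"
  shows "{t \<in> {0..<mdim n s}. t div n = 2*s} = (\<lambda>u. 2*s*n + u) ` {0..<n}"
proof (intro equalityI subsetI)
  fix t assume "t \<in> {t \<in> {0..<mdim n s}. t div n = 2*s}"
  then have "t div n = 2*s" by simp
  then have "t = 2*s*n + t mod n" by (metis div_mult_mod_eq)
  moreover have "t mod n \<in> {0..<n}" using assms by simp
  ultimately show "t \<in> (\<lambda>u. 2*s*n + u) ` {0..<n}" by (rule image_eqI)
next
  fix t assume "t \<in> (\<lambda>u. 2*s*n + u) ` {0..<n}"
  then obtain u where "u \<in> {0..<n}" and "t = 2*s*n + u" by blast
  then have "t < mdim n s" and "t div n = 2*s"
    by (simp_all add: mdim_def algebra_simps)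
  then show "t \<in> {t \<in> {0..<mdim n s}. t div n = 2*s}" by simp
qed

lemma Qmat_mult_block_column:
  assumes X: "X \<in> carrier_mat (mdim n s) n"
  shows "Qmat n s a k * X = Gammat n s * X + (pcol n s a k + rcol n s a k) * lastblk n s X"
proof (rule eq_matI)
  fix i j
  assume "i < dim_row (Gammat n s * X + (pcol n s a k + rcol n s a k) * lastblk n s X)"
    and "j < dim_col (Gammat n s * X + (pcol n s a k + rcol n s a k) * lastblk n s X)"
  then have i: "i < mdim n s" and j: "j < n" using X by auto
  then have "0 < n" by auto
  define A where "A u = a k (i div n) $$ (i mod n, u)" for u
  have "i div n < 2*s + 1"
    using i unfolding mdim_def by (rule less_mult_imp_div_less)
  then have Q_entry:
    "Qmat n s a k $$ (i,t) = Gammat n s $$ (i,t) + (if t div n = 2*s then A (t mod n) else 0)"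
    if "t < mdim n s" for t
    using i that by (auto simp: Qmat_def Gammat_def A_def)
  have "(Qmat n s a k * X) $$ (i,j) = (\<Sum>t\<in>{0..<mdim n s}. Qmat n s a k $$ (i,t) * X $$ (t,j))"
    using i j X by (simp add: scalar_prod_def)
  also have "\<dots> = (\<Sum>t\<in>{0..<mdim n s}. Gammat n s $$ (i,t) * X $$ (t,j))
      + (\<Sum>t\<in>{0..<mdim n s}. if t div n = 2*s then A (t mod n) * X $$ (t,j) else 0)"
    by (subst sum.distrib[symmetric]) (rule sum.cong, auto simp: Q_entry distrib_right)
  also have "(\<Sum>t\<in>{0..<mdim n s}. Gammat n s $$ (i,t) * X $$ (t,j)) = (Gammat n s * X) $$ (i,j)"
    using i j X by (simp add: scalar_prod_def)
  also have "(\<Sum>t\<in>{0..<mdim n s}. if t div n = 2*s then A (t mod n) * X $$ (t,j) else 0)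
     = (\<Sum>t\<in>{t \<in> {0..<mdim n s}. t div n = 2*s}. A (t mod n) * X $$ (t,j))"
    by (rule sum.inter_filter[symmetric]) simp
  also have "\<dots> = (\<Sum>u\<in>{0..<n}. A u * X $$ (2*s*n + u, j))"
    unfolding last_block_indices[OF \<open>0 < n\<close>] by (subst sum.reindex) (auto simp: inj_on_def)
  also have "\<dots> = ((pcol n s a k + rcol n s a k) * lastblk n s X) $$ (i,j)"
    using i j by (auto simp: scalar_prod_def A_def pcol_def rcol_def lastblk_def intro!: sum.cong)
  finally show "(Qmat n s a k * X) $$ (i,j) =
      (Gammat n s * X + (pcol n s a k + rcol n s a k) * lastblk n s X) $$ (i,j)"
    using i j X by simp
qed (use X in auto)

lemma Qmat_mult_Fcol_alpha_msum:
  "Qmat n s a k * msum (mdim n s) n (\<lambda>r. Fcol n s a (k+1) (g r) * alpha n s a (k+1) j (g r)) I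
   = msum (mdim n s) n (\<lambda>r. Fcol n s a k (Suc (g r)) * alpha n s a k (Suc j) (Suc (g r))) I"
proof -
  have shift: "Qmat n s a k * (Fcol n s a (k+1) i * alpha n s a (k+1) j i)
      = Fcol n s a k (Suc i) * alpha n s a k (Suc j) (Suc i)" for i
    by (simp add: Fcol_Suc
        assoc_mult_mat[OF block_matrices_carrier(1) Fcol_carrier alpha_carrier, symmetric])
  have "Qmat n s a k * msum (mdim n s) n
        (\<lambda>r. Fcol n s a (k+1) (g r) * alpha n s a (k+1) j (g r)) I
      = msum (mdim n s) n
        (\<lambda>r. Qmat n s a k * (Fcol n s a (k+1) (g r) * alpha n s a (k+1) j (g r))) I"
    by (rule mult_msum[OF block_matrices_carrier(1) mult_carrier_mat[OF Fcol_carrier alpha_carrier]])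
  also have "\<dots> = msum (mdim n s) n
        (\<lambda>r. Fcol n s a k (Suc (g r)) * alpha n s a k (Suc j) (Suc (g r))) I"
    by (rule msum_cong) (rule shift)
  finally show ?thesis .
qed

definition zero_block_rows :: "nat \<Rightarrow> nat \<Rightarrow> 'a::comm_ring_1 mat \<Rightarrow> bool \<Rightarrow> bool" where
  "zero_block_rows n s X e \<longleftrightarrow>
     (\<forall>i j. i < mdim n s \<longrightarrow> j < n \<longrightarrow> even (i div n) = e \<longrightarrow> X $$ (i,j) = 0)"

lemma zero_block_rows_add:
  "X \<in> carrier_mat (mdim n s) n \<Longrightarrow> Y \<in> carrier_mat (mdim n s) n \<Longrightarrow>
   zero_block_rows n s X e \<Longrightarrow> zero_block_rows n s Y e \<Longrightarrow> zero_block_rows n s (X + Y) e"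
  by (auto simp: zero_block_rows_def)

lemma zero_block_rows_rcol: "zero_block_rows n s (rcol n s a k) False"
  by (auto simp: zero_block_rows_def rcol_def)

lemma zero_block_rows_pcol_mult:
  "Y \<in> carrier_mat n n \<Longrightarrow> zero_block_rows n s (pcol n s a k * Y) True"
  by (auto simp: zero_block_rows_def scalar_prod_def pcol_def intro!: sum.neutral)

lemma zero_block_rows_Gammat_mult:
  assumes X: "X \<in> carrier_mat (mdim n s) n" and zero: "zero_block_rows n s X e"
  shows "zero_block_rows n s (Gammat n s * X) (\<not> e)"
  unfolding zero_block_rows_def
proof (intro allI impI)
  fix i j assume i: "i < mdim n s" and j: "j < n" and parity: "even (i div n) = (\<not> e)"
  have "Gammat n s $$ (i,t) * X $$ (t,j) = 0" if t: "t < mdim n s" for t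
  proof (cases "i div n = t div n + 1 \<and> i mod n = t mod n")
    case True
    then have "even (t div n) = e" using parity by auto
    then show ?thesis using zero t j unfolding zero_block_rows_def by auto
  qed (use i t in \<open>auto simp: Gammat_def\<close>)
  then show "(Gammat n s * X) $$ (i,j) = 0"
    using X i j by (simp add: scalar_prod_def)
qed

lemma zero_block_rows_Gcol: "zero_block_rows n s (Gcol n s a k j) (odd j)"
proof (induction j arbitrary: k)
  case 0
  show ?case by (simp add: zero_block_rows_rcol)
next
  case (Suc j)
  have "zero_block_rows n s (Gammat n s * Gcol n s a (k+1) j) (even j)"
    using zero_block_rows_Gammat_mult[OF Gcol_carrier Suc.IH] by simp
  then show ?case
    by (cases "even j")
      (auto simp: Gcol_Suc_even Gcol_Suc_odd
        intro!: zero_block_rows_add zero_block_rows_pcol_mult mult_carrier_mat)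
qed

lemma lastblk_zero_block_rows:
  assumes "zero_block_rows n s X True"
  shows "lastblk n s X = 0\<^sub>m n n"
proof (rule eq_matI)
  fix i j assume "i < dim_row (0\<^sub>m n n :: 'a mat)" "j < dim_col (0\<^sub>m n n :: 'a mat)"
  then have i: "i < n" and j: "j < n" by auto
  have "2*s*n + i < mdim n s" and "(2*s*n + i) div n = 2*s"
    using i by (simp_all add: mdim_def algebra_simps)
  then show "lastblk n s X $$ (i,j) = 0\<^sub>m n n $$ (i,j)"
    using assms i j by (simp add: zero_block_rows_def lastblk_def)
qed (auto simp: lastblk_def)

lemma lastblk_Gcol_odd: "odd j \<Longrightarrow> lastblk n s (Gcol n s a k j) = 0\<^sub>m n n"
  using zero_block_rows_Gcol[of n s a k j] by (simp add: lastblk_zero_block_rows)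

lemma Fcol_odd_expansion_step:
  assumes IH: "Fcol n s a (k+1) (2*l) =
      msum (mdim n s) n (\<lambda>r. Fcol n s a (k+1) (2*r-1) * alpha n s a (k+1) (2*l) (2*r-1)) {1..l}
      + Gcol n s a (k+1) (2*l)"
  shows "Fcol n s a k (2*l+1) =
      msum (mdim n s) n (\<lambda>r. Fcol n s a k (2*r) * alpha n s a k (2*l+1) (2*r)) {0..l}
      + Gcol n s a k (2*l+1)"
proof -
  let ?G = "Gcol n s a (k+1) (2*l)"
  let ?L = "lastblk n s ?G"
  let ?S = "msum (mdim n s) n (\<lambda>r. Fcol n s a k (2*r) * alpha n s a k (2*l+1) (2*r)) {1..l}"
  have shifted_sum:
    "Qmat n s a k * msum (mdim n s) n
        (\<lambda>r. Fcol n s a (k+1) (2*r-1) * alpha n s a (k+1) (2*l) (2*r-1)) {1..l} = ?S"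
    unfolding Qmat_mult_Fcol_alpha_msum
    by (rule msum_cong) (auto simp: Suc_diff_1 simp del: alpha.simps)
  have leading_term:
    "msum (mdim n s) n (\<lambda>r. Fcol n s a k (2*r) * alpha n s a k (2*l+1) (2*r)) {0..l}
       = rcol n s a k * ?L + ?S"
  proof -
    have "{0..l} = insert 0 {1..l}" by auto
    then show ?thesis
      by (simp add: msum_insert Fcol_0 mult_carrier_mat[OF block_matrices_carrier(3,5)])
  qed
  have "Fcol n s a k (2*l+1) = Qmat n s a k * (msum (mdim n s) n
      (\<lambda>r. Fcol n s a (k+1) (2*r-1) * alpha n s a (k+1) (2*l) (2*r-1)) {1..l} + ?G)"
    using Fcol_Suc[of n s a k "2*l"] IH by simp
  also have "\<dots> = ?S + (Gammat n s * ?G + (pcol n s a k + rcol n s a k) * ?L)"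
    by (simp only: mult_add_distrib_mat[OF block_matrices_carrier(1) msum_carrier Gcol_carrier]
        shifted_sum Qmat_mult_block_column[OF Gcol_carrier])
  also have "\<dots> = (rcol n s a k * ?L + ?S) + (pcol n s a k * ?L + Gammat n s * ?G)"
    by (rule eq_matI)
      (auto simp: add_mult_distrib_mat[OF block_matrices_carrier(4,3,5)]
        carrier_matD[OF Gcol_carrier] carrier_matD[OF msum_carrier] ac_simps)
  also have "\<dots> = msum (mdim n s) n (\<lambda>r. Fcol n s a k (2*r) * alpha n s a k (2*l+1) (2*r)) {0..l}
      + Gcol n s a k (2*l+1)"
    unfolding leading_term by (simp add: Gcol_Suc_even)
  finally show ?thesis .
qed

lemma Fcol_even_expansion_step:
  assumes IH: "Fcol n s a (k+1) (2*l+1) =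
      msum (mdim n s) n (\<lambda>r. Fcol n s a (k+1) (2*r) * alpha n s a (k+1) (2*l+1) (2*r)) {0..l}
      + Gcol n s a (k+1) (2*l+1)"
  shows "Fcol n s a k (2*Suc l) =
      msum (mdim n s) n (\<lambda>r. Fcol n s a k (2*r-1) * alpha n s a k (2*Suc l) (2*r-1)) {1..Suc l}
      + Gcol n s a k (2*Suc l)"
proof -
  let ?G = "Gcol n s a (k+1) (2*l+1)"
  have shifted_sum:
    "Qmat n s a k * msum (mdim n s) n
        (\<lambda>r. Fcol n s a (k+1) (2*r) * alpha n s a (k+1) (2*l+1) (2*r)) {0..l}
     = msum (mdim n s) n (\<lambda>r. Fcol n s a k (2*r-1) * alpha n s a k (2*Suc l) (2*r-1)) {1..Suc l}"
  proof -
    have "{1..Suc l} = Suc ` {0..l}" by simp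
    then show ?thesis
      unfolding Qmat_mult_Fcol_alpha_msum
      by (simp only: msum_reindex[OF inj_Suc] comp_def) (rule msum_cong, simp)
  qed
  have no_correction: "Qmat n s a k * ?G = Gcol n s a k (2*Suc l)"
    by (simp add: Qmat_mult_block_column lastblk_Gcol_odd Gcol_Suc_odd
        right_add_zero_mat[OF mult_carrier_mat[OF block_matrices_carrier(2) Gcol_carrier]])
  have "Fcol n s a k (2*Suc l) = Qmat n s a k * (msum (mdim n s) n
      (\<lambda>r. Fcol n s a (k+1) (2*r) * alpha n s a (k+1) (2*l+1) (2*r)) {0..l} + ?G)"
    using Fcol_Suc[of n s a k "2*l+1"] IH by simp
  also have "\<dots> = msum (mdim n s) n
      (\<lambda>r. Fcol n s a k (2*r-1) * alpha n s a k (2*Suc l) (2*r-1)) {1..Suc l}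
      + Gcol n s a k (2*Suc l)"
    by (simp only: mult_add_distrib_mat[OF block_matrices_carrier(1) msum_carrier Gcol_carrier]
        shifted_sum no_correction)
  finally show ?thesis .
qed

lemma Fcol_expansion:
  "Fcol n s a k (2*l) =
      msum (mdim n s) n (\<lambda>r. Fcol n s a k (2*r-1) * alpha n s a k (2*l) (2*r-1)) {1..l}
      + Gcol n s a k (2*l)
   \<and> Fcol n s a k (2*l+1) =
      msum (mdim n s) n (\<lambda>r. Fcol n s a k (2*r) * alpha n s a k (2*l+1) (2*r)) {0..l}
      + Gcol n s a k (2*l+1)"
proof (induction l arbitrary: k)
  case 0
  have "Fcol n s a k' 0 =
      msum (mdim n s) n (\<lambda>r. Fcol n s a k' (2*r-1) * alpha n s a k' 0 (2*r-1)) {1..0}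
      + Gcol n s a k' 0" for k'
    by (simp add: Fcol_0)
  then show ?case
    using Fcol_odd_expansion_step[of n s a k 0] by simp
next
  case (Suc l)
  have "Fcol n s a k' (2*Suc l) =
      msum (mdim n s) n (\<lambda>r. Fcol n s a k' (2*r-1) * alpha n s a k' (2*Suc l) (2*r-1)) {1..Suc l}
      + Gcol n s a k' (2*Suc l)" for k'
    using Fcol_even_expansion_step Suc.IH by blast
  then show ?case
    using Fcol_odd_expansion_step by blast
qed

theorem mainTheorem6:
  fixes n s N :: nat and a :: "int \<Rightarrow> nat \<Rightarrow> 'a::comm_ring_1 mat"
  assumes "n \<ge> 1" and "s \<ge> 1" and "N \<ge> 1"
    and "\<And>k j. j \<le> 2*s \<Longrightarrow> a k j \<in> carrier_mat n n"
    and "\<And>k j. a (k + int N) j = a k j"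
  shows "Fcol n s a k (2*l) =
           msum (mdim n s) n (\<lambda>r. Fcol n s a k (2*r-1) * alpha n s a k (2*l) (2*r-1)) {1..l}
           + Gcol n s a k (2*l)
       \<and> Fcol n s a k (2*l+1) =
           msum (mdim n s) n (\<lambda>r. Fcol n s a k (2*r) * alpha n s a k (2*l+1) (2*r)) {0..l}
           + Gcol n s a k (2*l+1)"
  by (rule Fcol_expansion)

end
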